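(* Let $h,v$ be permutations of $\Lambda=\{1,\dots,d\}$ and let $(\lambda_n,\epsilon_n)_{n\in\mathbb{Z}}$ be a combinatorial lift of a Sturmian sequence $\epsilon\in\{H,V\}^{\mathbb{Z}}$. Let $M$ be the minimal number of $H$'s between two consecutive $V$'s in $\epsilon$, let $(n_i)_{i\in\mathbb{Z}}$ be the increasing enumeration of the indices $n$ with $\epsilon_n=V$, and set $\mu_i=\lambda_{n_i}$, $\sigma_i=L$ if $n_{i+1}-n_i=M+1$ and $\sigma_i=R$ if $n_{i+1}-n_i=M+2$. Then the sequence $(\mu_i,\sigma_i)_{i\in\mathbb{Z}}$ is minimal.
   Context: A Sturmian sequence is a biinfinite sequence over two letters that is not eventually periodic and has exactly $n+1$ distinct subwords of each length $n$; in a Sturmian cutting sequence every block of $H$'s between consecutive $V$'s has length $M$ or $M+1$. A combinatorial lift of $\epsilon$ (a cutting sequence of a geodesic on the square torus, whose top/bottom edge is labeled $V$ and left/right edges $H$) is a sequence $(\lambda_n,\epsilon_n)$ with $\lambda_{n+1}=h(\lambda_n)$ if $\epsilon_{n+1}=H$ and $\lambda_{n+1}=v(\lambda_n)$ if $\epsilon_{n+1}=V$. A biinfinite sequence is minimal if for every finite word $w$ occurring in it there is $N$ such that every subword of length at least $N$ contains $w$. *)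

theory Defs
  imports "HOL-Combinatorics.Permutations"
begin

datatype letter = H | V
datatype side = L | R

definition subwords :: "(int \<Rightarrow> 'a) \<Rightarrow> nat \<Rightarrow> 'a list set" where
  "subwords s n = {map (\<lambda>i. s (k + int i)) [0..<n] | k. True}"

definition eventually_periodic_right :: "(int \<Rightarrow> 'a) \<Rightarrow> bool" where
  "eventually_periodic_right s \<longleftrightarrow> (\<exists>p>0. \<exists>N. \<forall>n\<ge>N. s (n + p) = s n)"

definition eventually_periodic_left :: "(int \<Rightarrow> 'a) \<Rightarrow> bool" where
  "eventually_periodic_left s \<longleftrightarrow> (\<exists>p>0. \<exists>N. \<forall>n\<le>N. s (n - p) = s n)"

definition sturmian :: "(int \<Rightarrow> letter) \<Rightarrow> bool" where
  "sturmian s \<longleftrightarrow> \<not> eventually_periodic_right s \<and> \<not> eventually_periodic_left s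
     \<and> (\<forall>n. card (subwords s n) = n + 1)"

definition comb_lift :: "nat \<Rightarrow> (nat \<Rightarrow> nat) \<Rightarrow> (nat \<Rightarrow> nat) \<Rightarrow> (int \<Rightarrow> letter) \<Rightarrow> (int \<Rightarrow> nat) \<Rightarrow> bool" where
  "comb_lift d h v eps lam \<longleftrightarrow> (\<forall>n. lam n \<in> {1..d}) \<and>
     (\<forall>n. lam (n + 1) = (if eps (n + 1) = H then h (lam n) else v (lam n)))"

definition occurs_at :: "'a list \<Rightarrow> (int \<Rightarrow> 'a) \<Rightarrow> int \<Rightarrow> bool" where
  "occurs_at w s k \<longleftrightarrow> (\<forall>j<length w. s (k + int j) = w ! j)"

definition minimal_seq :: "(int \<Rightarrow> 'a) \<Rightarrow> bool" where
  "minimal_seq s \<longleftrightarrow> (\<forall>w. (\<exists>k. occurs_at w s k) \<longrightarrow>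
     (\<exists>N::nat. \<forall>a::int. \<forall>m::nat. m \<ge> N \<longrightarrow>
        (\<exists>k. a \<le> k \<and> k + int (length w) \<le> a + int m \<and> occurs_at w s k)))"

end

theory Submission
  imports Defs
begin

text \<open>A Sturmian sequence has exactly one right special factor of each length. Hence a long
  window in which no length-n factor has two different continuations cannot exist: such a window
  would be periodic with a period at most n + 1, and the uniqueness of right special factors
  together with aperiodicity forbids arbitrarily long windows with a fixed period. So both
  extensions of the right special factor recur with bounded gaps, and every factor follows them
  deterministically: the sequence is uniformly recurrent, i.e. minimal.

  The lift lam is the orbit of lam 0 under a cocycle with values in the finite group of
  permutations of {1..d}. Among all windows, one containing the largest number of cocycle values
  at occurrences of a word is rigid: any window carrying the same letters contains the same set
  of values. Since that window recurs, the pair sequence (lam, eps) is minimal.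

  Finally, recording the letters at the successive V's together with the gap lengths is an
  induced sequence of a minimal sequence, hence minimal, and the Sturmian gaps take only the
  values M + 1 and M + 2, so (mu, sigma) is a letter-by-letter recoding of it.\<close>

section \<open>Factors, recodings and induced sequences\<close>

definition factor :: "(int \<Rightarrow> 'a) \<Rightarrow> int \<Rightarrow> nat \<Rightarrow> 'a list" where
  "factor s k n = map (\<lambda>t. s (k + int t)) [0..<n]"

lemma length_factor [simp]: "length (factor s k n) = n"
  by (simp add: factor_def)

lemma nth_factor [simp]: "t < n \<Longrightarrow> factor s k n ! t = s (k + int t)"
  by (simp add: factor_def)

lemma factor_Suc: "factor s k (Suc n) = factor s k n @ [s (k + int n)]"
  by (simp add: factor_def)

lemma factor_eq_iff: "factor s i n = factor s j n \<longleftrightarrow> (\<forall>t<n. s (i + int t) = s (j + int t))"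
  by (auto simp: factor_def)

lemma factor_Suc_shift:
  assumes "factor s i (Suc n) = factor s j (Suc n)"
  shows "factor s (i + 1) n = factor s (j + 1) n"
  unfolding factor_eq_iff
proof (intro allI impI)
  fix t assume "t < n"
  then have "s (i + int (Suc t)) = s (j + int (Suc t))"
    using assms unfolding factor_eq_iff by blast
  then show "s (i + 1 + int t) = s (j + 1 + int t)" by (simp add: add_ac)
qed

lemma factor_comp: "factor (f \<circ> s) k n = map f (factor s k n)"
  by (simp add: factor_def)

lemma occurs_at_iff_factor: "occurs_at w s k \<longleftrightarrow> factor s k (length w) = w"
  by (auto simp: occurs_at_def list_eq_iff_nth_eq)

lemma subwords_eq_range_factor: "subwords s n = range (\<lambda>k. factor s k n)"
  by (auto simp: subwords_def factor_def)

lemma minimal_seq_iff_factor: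
  "minimal_seq s \<longleftrightarrow>
     (\<forall>k n. \<exists>N. \<forall>a. \<exists>j. a \<le> j \<and> j + int n \<le> a + int N \<and> factor s j n = factor s k n)"
proof
  assume min: "minimal_seq s"
  show "\<forall>k n. \<exists>N. \<forall>a. \<exists>j. a \<le> j \<and> j + int n \<le> a + int N \<and> factor s j n = factor s k n"
  proof (intro allI)
    fix k n
    have "occurs_at (factor s k n) s k" by (simp add: occurs_at_iff_factor)
    with min obtain N where "\<forall>a m. N \<le> m \<longrightarrow>
        (\<exists>j. a \<le> j \<and> j + int n \<le> a + int m \<and> occurs_at (factor s k n) s j)"
      unfolding minimal_seq_def by fastforce
    then show "\<exists>N. \<forall>a. \<exists>j. a \<le> j \<and> j + int n \<le> a + int N \<and> factor s j n = factor s k n"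
      by (auto simp: occurs_at_iff_factor)
  qed
next
  assume recur: "\<forall>k n. \<exists>N. \<forall>a. \<exists>j. a \<le> j \<and> j + int n \<le> a + int N \<and> factor s j n = factor s k n"
  show "minimal_seq s" unfolding minimal_seq_def
  proof (intro allI impI)
    fix w assume "\<exists>k. occurs_at w s k"
    then obtain k where k: "factor s k (length w) = w" by (auto simp: occurs_at_iff_factor)
    obtain N where N: "\<forall>a. \<exists>j. a \<le> j \<and> j + int (length w) \<le> a + int N
        \<and> factor s j (length w) = factor s k (length w)"
      using recur by blast
    show "\<exists>N. \<forall>a m. N \<le> m \<longrightarrow> (\<exists>j. a \<le> j \<and> j + int (length w) \<le> a + int m \<and> occurs_at w s j)"
    proof (intro exI[of _ N] allI impI)
      fix a m assume "N \<le> m"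
      with N k show "\<exists>j. a \<le> j \<and> j + int (length w) \<le> a + int m \<and> occurs_at w s j"
        by (force simp: occurs_at_iff_factor)
    qed
  qed
qed

lemma minimal_seq_comp:
  assumes "minimal_seq s" shows "minimal_seq (f \<circ> s)"
  using assms unfolding minimal_seq_iff_factor factor_comp by metis

lemma strict_mono_add_ge:
  fixes r :: "int \<Rightarrow> int"
  assumes "strict_mono r" shows "r a + int t \<le> r (a + int t)"
proof (induction t)
  case (Suc t)
  have "r (a + int t) < r (a + int t + 1)" using assms by (simp add: strict_mono_less)
  then have "r a + int t + 1 \<le> r (a + int t + 1)" using Suc by linarith
  then show ?case by (simp add: algebra_simps)
qed simp

lemma in_range_strict_mono_gap:
  fixes r :: "int \<Rightarrow> int"
  assumes "strict_mono r" "r i \<le> y" "y \<le> r (i + 1)"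
  shows "y \<in> range r \<longleftrightarrow> y = r i \<or> y = r (i + 1)"
proof
  assume "y \<in> range r"
  then obtain t where "y = r t" by blast
  with assms show "y = r i \<or> y = r (i + 1)"
    by (cases "t \<le> i") (auto simp: strict_mono_less_eq dest: order_antisym)
qed auto

lemma strict_mono_next_eq:
  fixes r :: "int \<Rightarrow> int"
  assumes mono: "strict_mono r" and "0 < g" and "r i + g \<in> range r"
    and gap: "\<And>e. 0 < e \<Longrightarrow> e < g \<Longrightarrow> r i + e \<notin> range r"
  shows "r (i + 1) = r i + g"
proof -
  obtain t where t: "r t = r i + g" using assms(3) by auto
  then have "i + 1 \<le> t" using mono \<open>0 < g\<close> by (metis less_add_same_cancel1 strict_mono_less zless_imp_add1_zle)
  then have "r (i + 1) \<le> r t" using mono by (simp add: strict_mono_less_eq)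
  moreover have "r i < r (i + 1)" using mono by (simp add: strict_mono_less)
  ultimately show ?thesis using gap[of "r (i + 1) - r i"] t by force
qed

lemma strict_mono_translate:
  fixes r :: "int \<Rightarrow> int"
  assumes mono: "strict_mono r"
    and same: "\<And>y. r k \<le> y \<Longrightarrow> y \<le> r (k + int l) \<Longrightarrow> r i + (y - r k) \<in> range r \<longleftrightarrow> y \<in> range r"
  shows "t \<le> l \<Longrightarrow> r (i + int t) = r i + (r (k + int t) - r k)"
proof (induction t)
  case (Suc t)
  define y where "y = r (k + int t)"
  define g where "g = r (k + int t + 1) - y"
  have IH: "r (i + int t) = r i + (y - r k)" using Suc by (simp add: y_def)
  have lo: "r k \<le> y" and hi: "y + g \<le> r (k + int l)"
    using Suc.prems mono by (auto simp: y_def g_def strict_mono_less_eq)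
  have g: "0 < g" using mono by (simp add: g_def y_def strict_mono_less)
  have "r (i + int t + 1) = r (i + int t) + g"
  proof (rule strict_mono_next_eq[OF mono g])
    have shift: "r (i + int t) + e = r i + ((y + e) - r k)" for e using IH by simp
    show "r (i + int t) + g \<in> range r"
      using same[of "y + g"] lo hi g by (simp add: shift g_def)
    show "r (i + int t) + e \<notin> range r" if "0 < e" "e < g" for e
    proof -
      have "y + e \<notin> range r"
        using in_range_strict_mono_gap[OF mono, of "k + int t" "y + e"] that by (simp add: g_def y_def)
      then show ?thesis using same[of "y + e"] lo hi that by (simp add: shift)
    qed
  qed
  then show ?case using IH by (simp add: g_def y_def algebra_simps)
qed simp

lemma induced_factor_from_factor:
  fixes s :: "int \<Rightarrow> 'a" and r :: "int \<Rightarrow> int"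
  assumes mono: "strict_mono r" and returns: "range r = {n. P (s n)}"
    and occ: "factor s x len = factor s (r k) len" and len: "r (k + int l) - r k < int len"
  obtains i where "r i = x" "r (i + int l) < x + int len"
    and "factor (\<lambda>i. (s (r i), r (i + 1) - r i)) i l = factor (\<lambda>i. (s (r i), r (i + 1) - r i)) k l"
proof -
  let ?t = "\<lambda>i. (s (r i), r (i + 1) - r i)"
  have agree: "s (x + (y - r k)) = s y" if "r k \<le> y" "y \<le> r (k + int l)" for y
  proof -
    have "nat (y - r k) < len" using that len by linarith
    then have "s (x + int (nat (y - r k))) = s (r k + int (nat (y - r k)))"
      using occ unfolding factor_eq_iff by blast
    then show ?thesis using that by simp
  qed
  have "x \<in> range r" using agree[of "r k"] returns mono by (auto simp: strict_mono_less_eq)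
  then obtain i where i: "r i = x" by blast
  have returns_agree: "r i + (y - r k) \<in> range r \<longleftrightarrow> y \<in> range r"
    if "r k \<le> y" "y \<le> r (k + int l)" for y
    using agree[OF that] i returns by simp
  have times: "r (i + int t) = x + (r (k + int t) - r k)" if "t \<le> l" for t
    using strict_mono_translate[OF mono returns_agree that] i by simp
  have "factor ?t i l = factor ?t k l"
    unfolding factor_eq_iff
  proof (intro allI impI)
    fix t assume t: "t < l"
    have "r k \<le> r (k + int t)" "r (k + int t) \<le> r (k + int l)"
      using t mono by (auto simp: strict_mono_less_eq)
    moreover have "r (i + int t + 1) = x + (r (k + int t + 1) - r k)"
      using times[of "Suc t"] t by (simp add: algebra_simps)
    ultimately show "?t (i + int t) = ?t (k + int t)" using times[of t] t agree by simp
  qed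
  moreover have "r (i + int l) < x + int len" using times[of l] len by simp
  ultimately show ?thesis using that i by blast
qed

theorem minimal_seq_induced:
  fixes s :: "int \<Rightarrow> 'a" and r :: "int \<Rightarrow> int"
  assumes min: "minimal_seq s" and mono: "strict_mono r" and returns: "range r = {n. P (s n)}"
  shows "minimal_seq (\<lambda>i. (s (r i), r (i + 1) - r i))" (is "minimal_seq ?t")
  unfolding minimal_seq_iff_factor
proof (intro allI)
  fix k l
  define len where "len = nat (r (k + int l) - r k) + 1"
  have len: "r (k + int l) - r k < int len" by (simp add: len_def)
  obtain N where N: "\<And>a. \<exists>j. a \<le> j \<and> j + int len \<le> a + int N \<and> factor s j len = factor s (r k) len"
    using min unfolding minimal_seq_iff_factor by blast
  have "\<exists>i. a \<le> i \<and> i + int l \<le> a + int N \<and> factor ?t i l = factor ?t k l" for a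
  proof -
    obtain x where x: "r a \<le> x" "x + int len \<le> r a + int N" "factor s x len = factor s (r k) len"
      using N by blast
    obtain i where i: "r i = x" "r (i + int l) < x + int len" "factor ?t i l = factor ?t k l"
      using induced_factor_from_factor[OF mono returns x(3) len] by blast
    have "a \<le> i" using x(1) i(1) strict_mono_less_eq[OF mono, of a i] by simp
    moreover have "i + int l < a + int N"
    proof -
      have "r (i + int l) < r (a + int N)"
        using i(2) x(2) strict_mono_add_ge[OF mono, of a N] by linarith
      then show ?thesis using mono by (simp add: strict_mono_less)
    qed
    ultimately show ?thesis using i(3) by auto
  qed
  then show "\<exists>N. \<forall>a. \<exists>i. a \<le> i \<and> i + int l \<le> a + int N \<and> factor ?t i l = factor ?t k l" by blast
qed

section \<open>Lifting along a permutation cocycle\<close>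

locale permutation_cocycle =
  fixes A :: "'b set" and f :: "'a \<Rightarrow> 'b \<Rightarrow> 'b" and eps :: "int \<Rightarrow> 'a" and lam :: "int \<Rightarrow> 'b"
  assumes finite_A: "finite A"
    and f_permutes: "\<And>c. f c permutes A"
    and lam_step: "\<And>n. lam (n + 1) = f (eps (n + 1)) (lam n)"
begin

primrec cocycle_nonneg :: "nat \<Rightarrow> 'b \<Rightarrow> 'b" where
  "cocycle_nonneg 0 = id"
| "cocycle_nonneg (Suc m) = f (eps (int m + 1)) \<circ> cocycle_nonneg m"

primrec cocycle_neg :: "nat \<Rightarrow> 'b \<Rightarrow> 'b" where
  "cocycle_neg 0 = id"
| "cocycle_neg (Suc m) = inv (f (eps (- int m))) \<circ> cocycle_neg m"

definition cocycle :: "int \<Rightarrow> 'b \<Rightarrow> 'b" where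
  "cocycle n = (if 0 \<le> n then cocycle_nonneg (nat n) else cocycle_neg (nat (- n)))"

lemma cocycle_permutes: "cocycle n permutes A"
proof -
  have "cocycle_nonneg m permutes A" for m
  proof (induction m)
    case (Suc m)
    show ?case unfolding cocycle_nonneg.simps by (rule permutes_compose[OF Suc f_permutes])
  qed (simp only: cocycle_nonneg.simps permutes_id)
  moreover have "cocycle_neg m permutes A" for m
  proof (induction m)
    case (Suc m)
    show ?case unfolding cocycle_neg.simps by (rule permutes_compose[OF Suc permutes_inv[OF f_permutes]])
  qed (simp only: cocycle_neg.simps permutes_id)
  ultimately show ?thesis by (simp add: cocycle_def)
qed

lemma cocycle_step: "cocycle (n + 1) = f (eps (n + 1)) \<circ> cocycle n"
proof (cases "0 \<le> n")
  case True
  then have "nat (n + 1) = Suc (nat n)" by simp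
  with True show ?thesis by (simp add: cocycle_def)
next
  case False
  define m where "m = nat (- n - 1)"
  have "nat (- n) = Suc m" "- int m = n + 1" using False by (simp_all add: m_def)
  then have "cocycle n = inv (f (eps (n + 1))) \<circ> cocycle_neg m"
    using False by (simp add: cocycle_def)
  moreover have "cocycle (n + 1) = cocycle_neg m"
    using False by (cases "n = -1") (auto simp: cocycle_def m_def)
  ultimately show ?thesis
    using permutes_inv_o(1)[OF f_permutes] by (simp add: o_assoc)
qed

lemma lam_eq_cocycle: "lam n = cocycle n (lam 0)"
proof (induction n rule: int_induct[where k = 0])
  case (step1 i)
  then show ?case by (simp add: lam_step cocycle_step)
next
  case (step2 i)
  have "f (eps i) (lam (i - 1)) = f (eps i) (cocycle (i - 1) (lam 0))"
    using step2(2) lam_step[of "i - 1"] cocycle_step[of "i - 1"] by simp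
  moreover have "inj (f (eps i))" using f_permutes permutes_inj by blast
  ultimately show ?case by (simp add: inj_eq)
qed (simp add: cocycle_def)

lemma cocycle_translate:
  assumes "\<And>s. 1 \<le> s \<Longrightarrow> s \<le> t \<Longrightarrow> eps (a + int s) = eps (q + int s)"
  shows "cocycle (q + int t) = cocycle (a + int t) \<circ> inv (cocycle a) \<circ> cocycle q"
  using assms
proof (induction t)
  case 0
  show ?case using permutes_inv_o(1)[OF cocycle_permutes] by (simp add: o_assoc)
next
  case (Suc t)
  have IH: "cocycle (q + int t) = cocycle (a + int t) \<circ> inv (cocycle a) \<circ> cocycle q"
    by (rule Suc.IH) (use Suc.prems in auto)
  have e: "eps (q + int t + 1) = eps (a + int t + 1)"
    using Suc.prems[of "Suc t"] by (simp add: algebra_simps)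
  have Suc_eq: "x + int (Suc t) = x + int t + 1" for x :: int by simp
  have "cocycle (q + int (Suc t)) = f (eps (q + int t + 1)) \<circ> cocycle (q + int t)"
    unfolding Suc_eq by (rule cocycle_step)
  also have "\<dots> = f (eps (a + int t + 1)) \<circ> cocycle (a + int t) \<circ> inv (cocycle a) \<circ> cocycle q"
    by (simp only: IH e o_assoc)
  also have "\<dots> = cocycle (a + int (Suc t)) \<circ> inv (cocycle a) \<circ> cocycle q"
    unfolding Suc_eq cocycle_step by (simp only: o_assoc)
  finally show ?case .
qed

lemma factor_lam_eq:
  assumes "factor eps j l = factor eps k l" and "lam j = lam k"
  shows "factor lam j l = factor lam k l"
  unfolding factor_eq_iff
proof (intro allI impI)
  fix t assume "t < l"
  then show "lam (j + int t) = lam (k + int t)"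
  proof (induction t)
    case (Suc t)
    then have "eps (j + int t + 1) = eps (k + int t + 1)"
      using assms(1) unfolding factor_eq_iff by (metis add.assoc of_nat_Suc add.commute)
    with Suc show ?case using lam_step[of "j + int t"] lam_step[of "k + int t"] by (simp add: algebra_simps)
  qed (simp add: assms(2))
qed

definition cocycle_hits :: "'a list \<Rightarrow> int \<Rightarrow> nat \<Rightarrow> ('b \<Rightarrow> 'b) set" where
  "cocycle_hits u a len =
     {cocycle j | j. a \<le> j \<and> j + int (length u) \<le> a + int len \<and> factor eps j (length u) = u}"

lemma cocycle_hits_subset: "cocycle_hits u a len \<subseteq> {p. p permutes A}"
  using cocycle_permutes by (auto simp: cocycle_hits_def)

lemma finite_cocycle_hits: "finite (cocycle_hits u a len)"
  using finite_subset[OF cocycle_hits_subset finite_permutations[OF finite_A]] .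

lemma cocycle_hits_mono:
  "a' \<le> a \<Longrightarrow> a + int len \<le> a' + int len' \<Longrightarrow> cocycle_hits u a len \<subseteq> cocycle_hits u a' len'"
  by (auto simp: cocycle_hits_def)

text \<open>Right composition with the permutation inv (cocycle a) \<circ> cocycle q maps the cocycle values
  of the window at a injectively to those of any window at q carrying the same letters.\<close>
lemma card_cocycle_hits_translate:
  assumes "u \<noteq> []" and same: "factor eps q len = factor eps a len"
  shows "card (cocycle_hits u a len) \<le> card (cocycle_hits u q len)"
proof -
  define S where "S = inv (cocycle a) \<circ> cocycle q"
  have "surj S"
    using permutes_compose[OF cocycle_permutes[of q] permutes_inv[OF cocycle_permutes[of a]]]
    unfolding S_def by (rule permutes_surj)
  then have "inj (\<lambda>g. g \<circ> S)"
    by (intro injI) (metis fun.inj_map_strong surj_iff o_assoc comp_id)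
  moreover have "(\<lambda>g. g \<circ> S) ` cocycle_hits u a len \<subseteq> cocycle_hits u q len"
  proof
    fix g assume "g \<in> (\<lambda>g. g \<circ> S) ` cocycle_hits u a len"
    then obtain j where j: "g = cocycle j \<circ> S" "a \<le> j" "j + int (length u) \<le> a + int len"
        "factor eps j (length u) = u"
      by (auto simp: cocycle_hits_def)
    define t where "t = nat (j - a)"
    have jt: "j = a + int t" and tu: "t + length u \<le> len" using j(2,3) by (auto simp: t_def)
    have agree: "eps (a + int s) = eps (q + int s)" if "s < len" for s
      using same that unfolding factor_eq_iff by simp
    have "cocycle (q + int t) = cocycle (a + int t) \<circ> inv (cocycle a) \<circ> cocycle q"
    proof (rule cocycle_translate)
      fix s assume "1 \<le> s" "s \<le> t"
      then have "s < len" using tu \<open>u \<noteq> []\<close> by (cases u) auto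
      then show "eps (a + int s) = eps (q + int s)" by (rule agree)
    qed
    then have "g = cocycle (q + int t)" using j(1) jt by (simp add: S_def o_assoc)
    moreover have "factor eps (q + int t) (length u) = factor eps (a + int t) (length u)"
      unfolding factor_eq_iff
    proof (intro allI impI)
      fix s assume "s < length u"
      then have "eps (a + int (t + s)) = eps (q + int (t + s))" using tu by (intro agree) simp
      then show "eps (q + int t + int s) = eps (a + int t + int s)" by (simp add: add.assoc)
    qed
    ultimately show "g \<in> cocycle_hits u q len"
      using tu j(4) by (auto simp: cocycle_hits_def jt)
  qed
  ultimately show ?thesis
    using finite_cocycle_hits by (metis card_image card_mono inj_on_subset subset_UNIV)
qed

definition max_cocycle_hits :: "'a list \<Rightarrow> nat" where
  "max_cocycle_hits u = Max {card (cocycle_hits u a len) | a len. True}"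

lemma card_cocycle_hits_le_max: "card (cocycle_hits u a len) \<le> max_cocycle_hits u"
  and ex_card_cocycle_hits_max: "\<exists>a len. card (cocycle_hits u a len) = max_cocycle_hits u"
proof -
  have "{card (cocycle_hits u a len) | a len. True} \<subseteq> {..card {p. p permutes A}}"
    by (auto intro!: card_mono[OF finite_permutations[OF finite_A] cocycle_hits_subset])
  then have fin: "finite {card (cocycle_hits u a len) | a len. True}"
    using finite_subset by blast
  then show "card (cocycle_hits u a len) \<le> max_cocycle_hits u"
    unfolding max_cocycle_hits_def by (intro Max_ge) auto
  have "max_cocycle_hits u \<in> {card (cocycle_hits u a len) | a len. True}"
    unfolding max_cocycle_hits_def using fin by (intro Max_in) auto
  then show "\<exists>a len. card (cocycle_hits u a len) = max_cocycle_hits u" by fastforce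
qed

lemma cocycle_hits_max_eq:
  assumes "max_cocycle_hits u \<le> card (cocycle_hits u a len)"
    and "max_cocycle_hits u \<le> card (cocycle_hits u a' len')"
  shows "cocycle_hits u a len = cocycle_hits u a' len'"
proof -
  define b where "b = min a a'"
  define m where "m = nat (max (a + int len) (a' + int len') - b)"
  have eq_hull: "cocycle_hits u c l = cocycle_hits u b m"
    if "b \<le> c" "c + int l \<le> b + int m" "max_cocycle_hits u \<le> card (cocycle_hits u c l)" for c l
  proof -
    have sub: "cocycle_hits u c l \<subseteq> cocycle_hits u b m" using cocycle_hits_mono that(1,2) by blast
    moreover have "card (cocycle_hits u c l) = card (cocycle_hits u b m)"
      using that(3) card_cocycle_hits_le_max[of u b m] card_mono[OF finite_cocycle_hits sub] by linarith
    ultimately show ?thesis using card_subset_eq[OF finite_cocycle_hits] by blast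
  qed
  have "b \<le> a" "a + int len \<le> b + int m" "b \<le> a'" "a' + int len' \<le> b + int m"
    by (auto simp: b_def m_def)
  then show ?thesis using eq_hull assms by metis
qed

lemma ex_cocycle_hits_saturated:
  assumes "u \<noteq> []" and k: "factor eps k (length u) = u"
  obtains a len where "\<And>q. factor eps q len = factor eps a len \<Longrightarrow> cocycle k \<in> cocycle_hits u q len"
proof -
  obtain a0 len0 where max: "card (cocycle_hits u a0 len0) = max_cocycle_hits u"
    using ex_card_cocycle_hits_max by blast
  define a where "a = min a0 k"
  define len where "len = nat (max (a0 + int len0) (k + int (length u)) - a)"
  have "cocycle_hits u a0 len0 \<subseteq> cocycle_hits u a len"
    by (rule cocycle_hits_mono) (auto simp: a_def len_def)
  then have max': "max_cocycle_hits u \<le> card (cocycle_hits u a len)"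
    using max card_mono[OF finite_cocycle_hits] by metis
  have "cocycle k \<in> cocycle_hits u q len" if "factor eps q len = factor eps a len" for q
  proof -
    have "cocycle k \<in> cocycle_hits u a len"
      using k unfolding cocycle_hits_def by (auto simp: a_def len_def)
    moreover have "max_cocycle_hits u \<le> card (cocycle_hits u q len)"
      using max' card_cocycle_hits_translate[OF \<open>u \<noteq> []\<close> that] by linarith
    ultimately show ?thesis using cocycle_hits_max_eq[OF max'] by blast
  qed
  then show ?thesis using that by blast
qed

theorem minimal_seq_lift:
  assumes "minimal_seq eps"
  shows "minimal_seq (\<lambda>n. (lam n, eps n))" (is "minimal_seq ?s")
  unfolding minimal_seq_iff_factor
proof (intro allI)
  fix k l
  show "\<exists>N. \<forall>b. \<exists>j. b \<le> j \<and> j + int l \<le> b + int N \<and> factor ?s j l = factor ?s k l"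
  proof (cases "l = 0")
    case True
    then show ?thesis by (intro exI[of _ 0]) (auto simp: factor_def)
  next
    case False
    define u where "u = factor eps k l"
    have "u \<noteq> []" "factor eps k (length u) = u" using False by (auto simp: u_def factor_def)
    then obtain a len where sat: "\<And>q. factor eps q len = factor eps a len \<Longrightarrow> cocycle k \<in> cocycle_hits u q len"
      using ex_cocycle_hits_saturated by blast
    obtain N where N: "\<And>b. \<exists>q. b \<le> q \<and> q + int len \<le> b + int N \<and> factor eps q len = factor eps a len"
      using assms unfolding minimal_seq_iff_factor by blast
    have "\<exists>j. b \<le> j \<and> j + int l \<le> b + int N \<and> factor ?s j l = factor ?s k l" for b
    proof -
      obtain q where q: "b \<le> q" "q + int len \<le> b + int N" "factor eps q len = factor eps a len"
        using N by blast
      obtain j where j: "cocycle j = cocycle k" "q \<le> j" "j + int l \<le> q + int len"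
          "factor eps j l = factor eps k l"
        using sat[OF q(3)] by (auto simp: cocycle_hits_def u_def)
      have "lam j = lam k" using j(1) lam_eq_cocycle by metis
      with j(4) have "factor lam j l = factor lam k l" by (rule factor_lam_eq)
      with j(4) have "factor ?s j l = factor ?s k l" by (simp add: factor_eq_iff)
      with q j show ?thesis by (intro exI[of _ j]) auto
    qed
    then show ?thesis by blast
  qed
qed

end

section \<open>Sturmian sequences\<close>

lemma letter_neq_cases: "(x::letter) \<noteq> y \<Longrightarrow> c = x \<or> c = y"
  by (cases c; cases x; cases y) auto

definition V_positions_word :: "nat set \<Rightarrow> nat \<Rightarrow> letter list" where
  "V_positions_word S n = map (\<lambda>t. if t \<in> S then V else H) [0..<n]"

lemma inj_on_V_positions_word: "inj_on (\<lambda>S. V_positions_word S n) (Pow {..<n})"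
proof (rule inj_onI)
  fix S S' assume S: "S \<in> Pow {..<n}" "S' \<in> Pow {..<n}"
    and eq: "V_positions_word S n = V_positions_word S' n"
  have "t \<in> S \<longleftrightarrow> t \<in> S'" if "t < n" for t
    using arg_cong[OF eq, of "\<lambda>w. w ! t"] that by (simp add: V_positions_word_def split: if_splits)
  then show "S = S'" using S by auto
qed

locale sturmian_word =
  fixes eps :: "int \<Rightarrow> letter"
  assumes sturmian: "sturmian eps"
begin

lemma card_subwords: "card (subwords eps n) = n + 1"
  using sturmian by (simp add: sturmian_def)

lemma finite_subwords: "finite (subwords eps n)"
  using card_subwords[of n] card.infinite by fastforce

lemma factor_in_subwords: "factor eps k n \<in> subwords eps n"
  by (simp add: subwords_eq_range_factor)

lemma not_eventually_periodic:
  assumes "1 \<le> q" shows "\<exists>n\<ge>N. eps (n + int q) \<noteq> eps n"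
  using sturmian assms unfolding sturmian_def eventually_periodic_right_def by force

definition right_special :: "nat \<Rightarrow> int \<Rightarrow> bool" where
  "right_special n i \<longleftrightarrow>
     (\<exists>i'. factor eps i' n = factor eps i n \<and> eps (i' + int n) \<noteq> eps (i + int n))"

lemma right_special_snoc_in_subwords:
  assumes "right_special n i" shows "factor eps i n @ [c] \<in> subwords eps (Suc n)"
proof -
  obtain i' where i': "factor eps i' n = factor eps i n" "eps (i' + int n) \<noteq> eps (i + int n)"
    using assms unfolding right_special_def by blast
  have "c = eps (i' + int n) \<or> c = eps (i + int n)" using i'(2) by (rule letter_neq_cases)
  then show ?thesis
    using factor_in_subwords[of i "Suc n"] factor_in_subwords[of i' "Suc n"] i'(1)
    by (auto simp: factor_Suc)
qed

text \<open>Both extensions of two distinct right special factors would make the number of factors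
  grow by at least two from length n to length n + 1.\<close>
lemma right_special_unique:
  assumes "right_special n i" "right_special n j"
  shows "factor eps i n = factor eps j n"
proof (rule ccontr)
  assume ne: "factor eps i n \<noteq> factor eps j n"
  define S where "S = subwords eps (Suc n) - {factor eps i n @ [H], factor eps j n @ [H]}"
  have "subwords eps n \<subseteq> butlast ` S"
  proof
    fix w assume "w \<in> subwords eps n"
    then obtain p where w: "w = factor eps p n" by (auto simp: subwords_eq_range_factor)
    show "w \<in> butlast ` S"
    proof (cases "w = factor eps i n \<or> w = factor eps j n")
      case True
      then have "w @ [V] \<in> S" using right_special_snoc_in_subwords assms by (auto simp: S_def)
      then show ?thesis by (metis butlast_snoc image_eqI)
    next
      case False
      then have "factor eps p (Suc n) \<in> S"
        using factor_in_subwords[of p "Suc n"] by (auto simp: S_def factor_Suc w)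
      then show ?thesis by (metis w butlast_snoc factor_Suc image_eqI)
    qed
  qed
  then have "n + 1 \<le> card S"
    using card_subwords[of n] card_image_le[of S butlast] finite_subwords card_mono
    by (metis S_def finite_Diff finite_imageI order_trans)
  moreover have "card S = n"
    using right_special_snoc_in_subwords[OF assms(1)] right_special_snoc_in_subwords[OF assms(2)] ne
    by (simp add: S_def card_Diff_subset card_subwords finite_subwords)
  ultimately show False by simp
qed

definition periodic_window :: "nat \<Rightarrow> int \<Rightarrow> nat \<Rightarrow> bool" where
  "periodic_window q b len \<longleftrightarrow> (\<forall>x. b \<le> x \<and> x < b + int len \<longrightarrow> eps x = eps (x + int q))"

definition determined_window :: "nat \<Rightarrow> int \<Rightarrow> nat \<Rightarrow> bool" where
  "determined_window n a len \<longleftrightarrow> (\<forall>i i'. a \<le> i \<and> i < a + int len \<longrightarrow> a \<le> i' \<and> i' < a + int len \<longrightarrow>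
     factor eps i n = factor eps i' n \<longrightarrow> eps (i + int n) = eps (i' + int n))"

lemma repeated_factor:
  "\<exists>t1 t2. t1 < t2 \<and> t2 \<le> n + 1 \<and> factor eps (a + int t1) n = factor eps (a + int t2) n"
proof (rule ccontr)
  assume "\<not> ?thesis"
  then have "inj_on (\<lambda>t. factor eps (a + int t) n) {..n + 1}"
    by (intro linorder_inj_onI) auto
  then have "card {..n + 1} \<le> card (subwords eps n)"
    by (rule card_inj_on_le) (auto simp: factor_in_subwords finite_subwords)
  then show False by (simp add: card_subwords)
qed

lemma determined_window_propagate:
  assumes det: "determined_window n a len" and ij: "a \<le> i" "i \<le> j" "j + int s < a + int len"
    and same: "factor eps i n = factor eps j n"
  shows "factor eps (i + int s) (Suc n) = factor eps (j + int s) (Suc n)"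
  using ij(3)
proof (induction s)
  case 0
  then have "eps (i + int n) = eps (j + int n)"
    using det same ij(1,2) unfolding determined_window_def by simp
  with same show ?case by (simp add: factor_Suc)
next
  case (Suc s)
  then have "factor eps (i + int s + 1) n = factor eps (j + int s + 1) n"
    by (intro factor_Suc_shift) simp
  then have same': "factor eps (i + int (Suc s)) n = factor eps (j + int (Suc s)) n"
    by (simp add: algebra_simps)
  moreover have "a \<le> i + int (Suc s)" "i + int (Suc s) < a + int len" "a \<le> j + int (Suc s)"
    using Suc.prems ij(1,2) by auto
  ultimately have "eps (i + int (Suc s) + int n) = eps (j + int (Suc s) + int n)"
    using det Suc.prems unfolding determined_window_def by blast
  with same' show ?case by (simp add: factor_Suc)
qed

text \<open>By pigeonhole two length-n factors at distance q \<le> n + 1 coincide, and since continuations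
  are determined inside the window the coincidence propagates to its end.\<close>
lemma determined_window_periodic:
  assumes det: "determined_window n a len" and len: "n + 2 \<le> len"
  obtains q b where "1 \<le> q" "q \<le> n + 1" "periodic_window q b (len - 2)"
proof -
  obtain t1 t2 where t: "t1 < t2" "t2 \<le> n + 1" "factor eps (a + int t1) n = factor eps (a + int t2) n"
    using repeated_factor by blast
  define i j q where "i = a + int t1" and "j = a + int t2" and "q = t2 - t1"
  have j: "j = i + int q" using t(1) by (simp add: i_def j_def q_def)
  have agree: "factor eps (i + int s) (Suc n) = factor eps (j + int s) (Suc n)"
    if "s \<le> len - 1 - t2" for s
    using determined_window_propagate[OF det _ _ _ t(3)] that t len by (simp add: i_def j_def)
  have "periodic_window q i (len - 2)"
    unfolding periodic_window_def
  proof (intro allI impI)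
    fix x assume x: "i \<le> x \<and> x < i + int (len - 2)"
    define s where "s = min (nat (x - i)) (len - 1 - t2)"
    define r where "r = nat (x - i) - s"
    have "r < Suc n" and x_eq: "x = i + int s + int r" using x t(2) len by (auto simp: s_def r_def)
    moreover have "s \<le> len - 1 - t2" by (simp add: s_def)
    ultimately have "eps (i + int s + int r) = eps (j + int s + int r)"
      using agree unfolding factor_eq_iff by blast
    then show "eps x = eps (x + int q)" by (simp add: x_eq j algebra_simps)
  qed
  moreover have "1 \<le> q" "q \<le> n + 1" using t by (auto simp: q_def)
  ultimately show ?thesis using that by blast
qed

lemma periodic_window_mono: "periodic_window q b len \<Longrightarrow> len' \<le> len \<Longrightarrow> periodic_window q b len'"
  unfolding periodic_window_def by force

lemma periodic_window_first_break:
  assumes "1 \<le> q" and "periodic_window q b len"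
  obtains c where "periodic_window q c len" "eps (c + int len) \<noteq> eps (c + int len + int q)"
proof -
  define D where "D = {d::nat. eps (b + int d) \<noteq> eps (b + int d + int q)}"
  obtain n where "b \<le> n" "eps (n + int q) \<noteq> eps n" using not_eventually_periodic[OF assms(1)] by blast
  then have "nat (n - b) \<in> D" by (simp add: D_def)
  define d where "d = (LEAST d. d \<in> D)"
  have dD: "d \<in> D" unfolding d_def by (rule LeastI) fact
  have before: "eps (b + int e) = eps (b + int e + int q)" if "e < d" for e
    using not_less_Least[of e "\<lambda>d. d \<in> D"] that by (auto simp: D_def d_def)
  have "len \<le> d"
  proof (rule ccontr)
    assume "\<not> len \<le> d"
    then have "eps (b + int d) = eps (b + int d + int q)"
      using assms(2) unfolding periodic_window_def by simp
    then show False using dD by (simp add: D_def)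
  qed
  define c where "c = b + int d - int len"
  have "periodic_window q c len"
    unfolding periodic_window_def
  proof (intro allI impI)
    fix x assume "c \<le> x \<and> x < c + int len"
    then have "nat (x - b) < d" "b \<le> x" using \<open>len \<le> d\<close> by (auto simp: c_def)
    then show "eps x = eps (x + int q)" using before[of "nat (x - b)"] by simp
  qed
  moreover have "eps (c + int len) \<noteq> eps (c + int len + int q)" using dD by (simp add: D_def c_def)
  ultimately show ?thesis using that by blast
qed

lemma right_special_after_periodic_window:
  assumes per: "periodic_window q c (m + q)"
    and break: "eps (c + int (m + q)) \<noteq> eps (c + int (m + q) + int q)"
  shows "right_special m (c + int q)" and "periodic_window q (c + int q) m"
proof -
  show per': "periodic_window q (c + int q) m"
    using per unfolding periodic_window_def by simp
  have "factor eps (c + int q + int q) m = factor eps (c + int q) m"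
    using per' unfolding periodic_window_def factor_eq_iff by (simp add: algebra_simps)
  moreover have "eps (c + int q + int q + int m) \<noteq> eps (c + int q + int m)"
    using break by (simp add: algebra_simps)
  ultimately show "right_special m (c + int q)"
    unfolding right_special_def by blast
qed

lemma periodic_window_factor:
  assumes "factor eps i m = factor eps j m" and "periodic_window q j (m - q)"
  shows "periodic_window q i (m - q)"
  unfolding periodic_window_def
proof (intro allI impI)
  fix x assume x: "i \<le> x \<and> x < i + int (m - q)"
  define t where "t = nat (x - i)"
  have "t < m" "t + q < m" and x_eq: "x = i + int t" using x by (auto simp: t_def)
  then have "eps (i + int t) = eps (j + int t)" "eps (i + int (t + q)) = eps (j + int (t + q))"
    using assms(1) unfolding factor_eq_iff by blast+
  moreover have "eps (j + int t) = eps (j + int t + int q)"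
    using assms(2) \<open>t + q < m\<close> unfolding periodic_window_def by simp
  ultimately show "eps x = eps (x + int q)" by (simp add: x_eq add.assoc)
qed

text \<open>If a period q persisted on arbitrarily long windows, every right special factor would
  inherit it, because the right special factor of each length is unique.\<close>
lemma right_special_periodic:
  assumes "1 \<le> q" and long: "\<And>len. \<exists>b. periodic_window q b len" and "right_special m i"
  shows "periodic_window q i (m - q)"
proof -
  obtain b where "periodic_window q b (m + q)" using long by blast
  then obtain c where "periodic_window q c (m + q)" "eps (c + int (m + q)) \<noteq> eps (c + int (m + q) + int q)"
    using periodic_window_first_break assms(1) by blast
  note c = right_special_after_periodic_window[OF this]
  have "factor eps i m = factor eps (c + int q) m" using right_special_unique[OF assms(3) c(1)] .
  moreover have "periodic_window q (c + int q) (m - q)" using periodic_window_mono[OF c(2)] by simp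
  ultimately show ?thesis by (rule periodic_window_factor)
qed

lemma break_determines_future:
  assumes "1 \<le> q" and long: "\<And>len. \<exists>b. periodic_window q b len"
    and break: "eps b1 \<noteq> eps (b1 + int q)"
    and same: "factor eps b1 (Suc q) = factor eps b2 (Suc q)"
  shows "factor eps b1 s = factor eps b2 s"
proof (induction s)
  case (Suc s)
  show ?case
  proof (cases "s \<le> q")
    case True
    then show ?thesis using same unfolding factor_eq_iff by auto
  next
    case False
    have "eps (b1 + int s) = eps (b2 + int s)"
    proof (rule ccontr)
      assume "eps (b1 + int s) \<noteq> eps (b2 + int s)"
      then have "right_special s b1" unfolding right_special_def using Suc.IH by (auto intro!: exI[of _ b2])
      then have "periodic_window q b1 (s - q)" by (rule right_special_periodic[OF assms(1) long])
      then show False using break False unfolding periodic_window_def by simp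
    qed
    then show ?thesis using Suc.IH by (simp add: factor_Suc)
  qed
qed (simp add: factor_def)

lemma no_long_periodic_window:
  assumes "1 \<le> q" shows "\<exists>len. \<forall>b. \<not> periodic_window q b len"
proof (rule ccontr)
  assume "\<not> ?thesis"
  then have long: "\<And>len. \<exists>b. periodic_window q b len" by blast
  define B where "B = {n. eps n \<noteq> eps (n + int q)}"
  have "infinite B"
  proof
    assume "finite B"
    obtain n where "Max B + 1 \<le> n" "eps (n + int q) \<noteq> eps n"
      using not_eventually_periodic[OF assms] by blast
    then show False using Max_ge[OF \<open>finite B\<close>, of n] by (auto simp: B_def)
  qed
  moreover have "(\<lambda>n. factor eps n (Suc q)) ` B \<subseteq> subwords eps (Suc q)"
    using factor_in_subwords by auto
  ultimately have "\<not> inj_on (\<lambda>n. factor eps n (Suc q)) B"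
    using finite_subwords by (metis finite_imageD finite_subset)
  then obtain x y where xy: "x \<in> B" "y \<in> B" "x \<noteq> y"
      "factor eps x (Suc q) = factor eps y (Suc q)"
    unfolding inj_on_def by blast
  define b1 b2 where "b1 = min x y" and "b2 = max x y"
  have b: "b1 \<in> B" "b1 < b2" "factor eps b1 (Suc q) = factor eps b2 (Suc q)"
    using xy by (auto simp: b1_def b2_def min_def max_def)
  have shift: "eps (b1 + int s) = eps (b2 + int s)" for s
    using break_determines_future[OF assms long _ b(3), of "Suc s"] b(1) by (simp add: B_def factor_Suc)
  have "eps (n + (b2 - b1)) = eps n" if "b1 \<le> n" for n
    using shift[of "nat (n - b1)"] that by (simp add: algebra_simps)
  then have "eventually_periodic_right eps"
    unfolding eventually_periodic_right_def using \<open>b1 < b2\<close> by (intro exI[of _ "b2 - b1"]) auto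
  with sturmian show False by (simp add: sturmian_def)
qed

lemma no_long_determined_window: "\<exists>W. \<forall>a. \<not> determined_window n a W"
proof -
  obtain L where L: "\<And>q b. 1 \<le> q \<Longrightarrow> \<not> periodic_window q b (L q)"
    using no_long_periodic_window by metis
  define W where "W = Max (L ` {1..n + 1}) + n + 2"
  have "\<not> determined_window n a W" for a
  proof
    assume det: "determined_window n a W"
    moreover have "n + 2 \<le> W" by (simp add: W_def)
    ultimately obtain q b where q: "1 \<le> q" "q \<le> n + 1" "periodic_window q b (W - 2)"
      by (rule determined_window_periodic)
    have "L q \<le> Max (L ` {1..n + 1})" using q(1,2) by (intro Max_ge) auto
    then have "periodic_window q b (L q)" using q(3) periodic_window_mono by (simp add: W_def)
    then show False using L q(1) by blast
  qed
  then show ?thesis by blast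
qed

lemma factor_transport:
  assumes "factor eps i (Suc n) = factor eps j (Suc n)"
    and "\<And>s. 0 < s \<Longrightarrow> s \<le> D \<Longrightarrow> \<not> right_special n (j + int s)"
  shows "factor eps (i + int D) (Suc n) = factor eps (j + int D) (Suc n)"
  using assms(2)
proof (induction D)
  case (Suc D)
  then have "factor eps (i + int D) (Suc n) = factor eps (j + int D) (Suc n)" by simp
  then have "factor eps (i + int D + 1) n = factor eps (j + int D + 1) n" by (rule factor_Suc_shift)
  then have same: "factor eps (i + int (Suc D)) n = factor eps (j + int (Suc D)) n"
    by (simp add: algebra_simps)
  moreover have "\<not> right_special n (j + int (Suc D))" by (rule Suc.prems) simp_all
  ultimately have "eps (i + int (Suc D) + int n) = eps (j + int (Suc D) + int n)"
    unfolding right_special_def by blast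
  with same show ?case by (simp add: factor_Suc)
qed (simp add: assms(1))

lemma right_special_extension_in_window:
  assumes "\<not> determined_window n a W" and "right_special n j"
  obtains i where "a \<le> i" "i < a + int W" "factor eps i (Suc n) = factor eps j (Suc n)"
proof -
  obtain i i' where w: "a \<le> i" "i < a + int W" "a \<le> i'" "i' < a + int W"
      "factor eps i n = factor eps i' n" "eps (i + int n) \<noteq> eps (i' + int n)"
    using assms(1) unfolding determined_window_def by blast
  then have "right_special n i" unfolding right_special_def by (auto intro!: exI[of _ i'])
  then have fi: "factor eps i n = factor eps j n" using right_special_unique assms(2) by blast
  have "eps (j + int n) = eps (i + int n) \<or> eps (j + int n) = eps (i' + int n)"
    using w(6) by (rule letter_neq_cases)
  then show ?thesis
  proof
    assume "eps (j + int n) = eps (i + int n)"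
    then show ?thesis using that[of i] w fi by (simp add: factor_Suc)
  next
    assume "eps (j + int n) = eps (i' + int n)"
    then show ?thesis using that[of i'] w fi by (simp add: factor_Suc)
  qed
qed

text \<open>The word at k is reached deterministically from the last right special position j before k,
  so it recurs wherever the corresponding extension of the right special factor recurs.\<close>
theorem minimal_seq_sturmian: "minimal_seq eps"
  unfolding minimal_seq_iff_factor
proof (intro allI)
  fix k n
  obtain W where W: "\<And>a. \<not> determined_window n a W" using no_long_determined_window by blast
  define R where "R = {p. k - int W \<le> p \<and> p \<le> k \<and> right_special n p}"
  obtain i i' where "k - int W \<le> i" "i < k" "factor eps i n = factor eps i' n"
      "eps (i + int n) \<noteq> eps (i' + int n)"
    using W[of "k - int W"] unfolding determined_window_def by auto
  then have "i \<in> R" unfolding R_def right_special_def by (auto intro!: exI[of _ i'])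
  moreover have "finite R" by (rule finite_subset[of _ "{k - int W..k}"]) (auto simp: R_def)
  ultimately have "Max R \<in> R" using Max_in by blast
  define j where "j = Max R"
  define D where "D = nat (k - j)"
  have j: "right_special n j" "j + int D = k" using \<open>Max R \<in> R\<close> by (auto simp: R_def j_def D_def)
  have later: "\<not> right_special n (j + int s)" if "0 < s" "s \<le> D" for s
  proof
    assume "right_special n (j + int s)"
    then have "j + int s \<in> R" using \<open>Max R \<in> R\<close> that by (auto simp: R_def j_def D_def)
    then show False using Max_ge[OF \<open>finite R\<close>] that by (fastforce simp: j_def)
  qed
  have "\<exists>i. a \<le> i \<and> i + int n \<le> a + int (W + D + n) \<and> factor eps i n = factor eps k n" for a
  proof -
    obtain i where i: "a \<le> i" "i < a + int W" "factor eps i (Suc n) = factor eps j (Suc n)"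
      using right_special_extension_in_window[OF W j(1)] by blast
    have "factor eps (i + int D) (Suc n) = factor eps k (Suc n)"
      using factor_transport[OF i(3) later] j(2) by simp
    then have "factor eps (i + int D) n = factor eps k n" by (simp add: factor_Suc)
    then show ?thesis using i by (intro exI[of _ "i + int D"]) auto
  qed
  then show "\<exists>N. \<forall>a. \<exists>i. a \<le> i \<and> i + int n \<le> a + int N \<and> factor eps i n = factor eps k n"
    by blast
qed

text \<open>A gap longer than a shortest gap plus one yields m + 4 factors of length m + 2, where m + 1
  is the shortest gap: the word without V, the m + 2 words with a single V, and V H^m V.\<close>
lemma shortest_gap_bound:
  fixes r :: "int \<Rightarrow> int"
  assumes mono: "strict_mono r" and returns: "range r = {n. eps n = V}"
    and shortest: "\<And>k. r (i + 1) - r i \<le> r (k + 1) - r k"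
  shows "r (j + 1) - r j \<le> r (i + 1) - r i + 1"
proof (rule ccontr)
  assume long: "\<not> ?thesis"
  define m where "m = nat (r (i + 1) - r i - 1)"
  have gi: "r (i + 1) = r i + int m + 1" using mono by (simp add: m_def strict_mono_less)
  have gj: "r j + int m + 3 \<le> r (j + 1)" using long gi by linarith
  have gprev: "r (i - 1) + int m + 1 \<le> r i" using shortest[of "i - 1"] gi by simp
  have pattern: "V_positions_word S (m + 2) \<in> subwords eps (m + 2)"
    if "\<And>t. t < m + 2 \<Longrightarrow> p + int t \<in> range r \<longleftrightarrow> t \<in> S" for S p
  proof -
    have letters: "eps (p + int t) = (if t \<in> S then V else H)" if "t < m + 2" for t
      using \<open>t < m + 2 \<Longrightarrow> _\<close>[OF that] returns by (cases "eps (p + int t)") auto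
    have "factor eps p (m + 2) = V_positions_word S (m + 2)"
      unfolding factor_def V_positions_word_def by (intro map_cong refl letters) auto
    then show ?thesis using factor_in_subwords by metis
  qed
  note gap = in_range_strict_mono_gap[OF mono]
  define F where "F = insert {} (insert {0, m + 1} ((\<lambda>s. {s}) ` {..m + 1}))"
  have "V_positions_word S (m + 2) \<in> subwords eps (m + 2)" if "S \<in> F" for S
  proof -
    consider "S = {}" | "S = {0, m + 1}" | "S = {0}" | "S = {m + 1}" | s where "S = {s}" "1 \<le> s" "s \<le> m"
      using \<open>S \<in> F\<close> unfolding F_def by force
    then show ?thesis
    proof cases
      case 1
      show ?thesis by (rule pattern[where p = "r j + 1"]) (use gap[of j] gj in \<open>auto simp: 1\<close>)
    next
      case 2
      show ?thesis by (rule pattern[where p = "r i"]) (use gap[of i] gi in \<open>auto simp: 2\<close>)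
    next
      case 3
      show ?thesis by (rule pattern[where p = "r j"]) (use gap[of j] gj in \<open>auto simp: 3\<close>)
    next
      case 4
      show ?thesis by (rule pattern[where p = "r (j + 1) - int (m + 1)"]) (use gap[of j] gj in \<open>auto simp: 4\<close>)
    next
      case (5 s)
      show ?thesis
      proof (rule pattern[where p = "r i - int s"])
        fix t assume "t < m + 2"
        show "r i - int s + int t \<in> range r \<longleftrightarrow> t \<in> S"
        proof (cases "t \<le> s")
          case True
          then show ?thesis using gap[of "i - 1" "r i - int s + int t"] gprev 5 by auto
        next
          case False
          then show ?thesis using gap[of i "r i - int s + int t"] gi 5 \<open>t < m + 2\<close> by auto
        qed
      qed
    qed
  qed
  moreover have "F \<subseteq> Pow {..<m + 2}" by (auto simp: F_def)
  moreover have "card F = m + 4"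
  proof -
    have "card ((\<lambda>s. {s}) ` {..m + 1}) = m + 2" by (simp add: card_image)
    moreover have "{0, m + 1} \<notin> (\<lambda>s. {s}) ` {..m + 1}" "{} \<notin> (\<lambda>s. {s}) ` {..m + 1}" by auto
    ultimately show ?thesis by (simp add: F_def card_insert_if)
  qed
  ultimately have "m + 4 \<le> card (subwords eps (m + 2))"
    using inj_on_V_positions_word[of "m + 2"] finite_subwords
    by (metis (no_types, lifting) card_image card_mono image_subsetI inj_on_subset)
  then show False by (simp add: card_subwords)
qed

lemma sturmian_gaps:
  fixes r :: "int \<Rightarrow> int"
  assumes mono: "strict_mono r" and returns: "range r = {n. eps n = V}"
    and M: "M = (LEAST m. \<exists>i. r (i + 1) - r i - 1 = int m)"
  shows "r (j + 1) - r j = int M + 1 \<or> r (j + 1) - r j = int M + 2"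
proof -
  have pos: "1 \<le> r (k + 1) - r k" for k using strict_monoD[OF mono, of k "k + 1"] by simp
  have "\<exists>i. r (i + 1) - r i - 1 = int (nat (r 1 - r 0 - 1))"
    using pos[of 0] by (intro exI[of _ 0]) simp
  then have "\<exists>i. r (i + 1) - r i - 1 = int M" unfolding M by (rule LeastI)
  then obtain i where "r (i + 1) - r i - 1 = int M" by blast
  then have i: "r (i + 1) - r i = int M + 1" by simp
  have lower: "int M + 1 \<le> r (k + 1) - r k" for k
  proof -
    have "M \<le> nat (r (k + 1) - r k - 1)" unfolding M by (rule Least_le) (use pos[of k] in auto)
    then show ?thesis using pos[of k] by (simp add: le_nat_iff)
  qed
  have "r (j + 1) - r j \<le> int M + 2"
    using shortest_gap_bound[OF mono returns, of i j] i lower by simp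
  then show ?thesis using lower[of j] by linarith
qed

end

theorem corollary5p6:
  fixes d :: nat and h v :: "nat \<Rightarrow> nat" and eps :: "int \<Rightarrow> letter" and lam :: "int \<Rightarrow> nat"
    and nidx :: "int \<Rightarrow> int" and M :: nat
    and mu :: "int \<Rightarrow> nat" and sigma :: "int \<Rightarrow> side"
  assumes "h permutes {1..d}" and "v permutes {1..d}"
    and "sturmian eps"
    and "comb_lift d h v eps lam"
    and "strict_mono nidx" and "range nidx = {n. eps n = V}"
    and "M = (LEAST m. \<exists>i. nidx (i + 1) - nidx i - 1 = int m)"
    and "\<And>i. mu i = lam (nidx i)"
    and "\<And>i. nidx (i + 1) - nidx i = int M + 1 \<Longrightarrow> sigma i = L"
    and "\<And>i. nidx (i + 1) - nidx i = int M + 2 \<Longrightarrow> sigma i = R"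
  shows "minimal_seq (\<lambda>i. (mu i, sigma i))"
proof -
  interpret sturmian_word eps by (rule sturmian_word.intro) fact
  interpret permutation_cocycle "{1..d}" "\<lambda>c. if c = H then h else v" eps lam
    using assms(1,2,4) by unfold_locales (auto simp: comb_lift_def)
  let ?induced = "\<lambda>i. ((lam (nidx i), eps (nidx i)), nidx (i + 1) - nidx i)"
  let ?recode = "\<lambda>((x, _), g). (x, if g = int M + 1 then L else R)"
  have "minimal_seq ?induced"
    using minimal_seq_induced[OF minimal_seq_lift[OF minimal_seq_sturmian] assms(5),
        where P = "\<lambda>p. snd p = V"] assms(6)
    by simp
  then have "minimal_seq (?recode \<circ> ?induced)" by (rule minimal_seq_comp)
  moreover have "?recode \<circ> ?induced = (\<lambda>i. (mu i, sigma i))"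
  proof
    fix i
    show "(?recode \<circ> ?induced) i = (mu i, sigma i)"
      using sturmian_gaps[OF assms(5,6,7), of i] assms(8-10)[of i] by auto
  qed
  ultimately show ?thesis by simp
qed

end
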